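(* Let $v,\rho\in\mathbb{N}^+$, let $\boldsymbol\alpha=(\alpha,\dots,\alpha)\in\mathbb{N}^{v+1}$ with $\alpha\ge1$ (non-informative prior), and let $R$ be a symmetric, bounded, strictly proper scoring rule on outcomes $\{0,\dots,v\}$. Fix a reviewer $i$ with observed signals $\mathbf{t}_i=(t_{i,1},\dots,t_{i,\rho})\in\{0,\dots,v\}^\rho$ and true posterior predictive distribution $\boldsymbol\theta=\mathbf{p}^{(\rho)}(\mathbf{t}_i)$, and suppose $\mathbf{t}_i$ has a unique mode $z$, i.e. $\#\{m:t_{i,m}=z\}>\#\{m:t_{i,m}=y\}$ for all $y\ne z$. The reviewer reports a single value $r\in\{0,\dots,v\}$ and is scored by $\sum_{j\ne i}(\gamma R(\mathbf{p}(r),r_j)+\lambda)$ with $\gamma>0,\lambda\in\mathbb{R}$; his expected score is $$S_i(r)=\sum_{j\neq i}\sum_{e=0}^v\theta_e\big(\gamma R(\mathbf{p}(r),e)+\lambda\big).$$ Then $S_i(r)$ is strictly maximized over $r\in\{0,\dots,v\}$ if and only if $r=z$.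
   Context: For $x\in\{0,\dots,v\}$, $\mathbf{p}(x)$ is the probability vector with $p_k(x)=\frac{\alpha_k+1}{1+\sum_m\alpha_m}$ if $k=x$ and $\frac{\alpha_k}{1+\sum_m\alpha_m}$ otherwise. For $\mathbf{x}\in\{0,\dots,v\}^\rho$, $\mathbf{p}^{(\rho)}(\mathbf{x})$ has entries $p^{(\rho)}_k(\mathbf{x})=\frac{\alpha_k+\#\{m:x_m=k\}}{\rho+\sum_l\alpha_l}$. A scoring rule $R(\mathbf{z},e)$ is strictly proper if $\sum_eq_eR(\mathbf{z},e)$ is uniquely maximized at $\mathbf{z}=\mathbf{q}$ for every probability vector $\mathbf{q}$; symmetric if its value is invariant under simultaneously permuting the entries of $\mathbf{z}$ and relabeling the outcome $e$ accordingly; bounded if it is always finite. *)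

theory Defs
  imports Complex_Main "HOL-Combinatorics.Permutations"
begin

definition prob_vec :: "nat \<Rightarrow> (nat \<Rightarrow> real) \<Rightarrow> bool" where
  "prob_vec v q \<longleftrightarrow> (\<forall>k\<le>v. 0 \<le> q k) \<and> (\<forall>k>v. q k = 0) \<and> (\<Sum>k\<le>v. q k) = 1"

definition p_single :: "nat \<Rightarrow> (nat \<Rightarrow> nat) \<Rightarrow> nat \<Rightarrow> nat \<Rightarrow> real" where
  "p_single v a x k = (if k \<le> v then
      (real (a k) + (if k = x then 1 else 0)) / (1 + (\<Sum>m\<le>v. real (a m))) else 0)"

definition sig_count :: "nat \<Rightarrow> (nat \<Rightarrow> nat) \<Rightarrow> nat \<Rightarrow> nat" where
  "sig_count \<rho> t k = card {m \<in> {1..\<rho>}. t m = k}"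

definition p_rho :: "nat \<Rightarrow> nat \<Rightarrow> (nat \<Rightarrow> nat) \<Rightarrow> (nat \<Rightarrow> nat) \<Rightarrow> nat \<Rightarrow> real" where
  "p_rho v \<rho> a t k = (if k \<le> v then
      (real (a k) + real (sig_count \<rho> t k)) / (real \<rho> + (\<Sum>l\<le>v. real (a l))) else 0)"

definition strictly_proper :: "nat \<Rightarrow> ((nat \<Rightarrow> real) \<Rightarrow> nat \<Rightarrow> real) \<Rightarrow> bool" where
  "strictly_proper v R \<longleftrightarrow>
     (\<forall>q. prob_vec v q \<longrightarrow> (\<forall>z. prob_vec v z \<longrightarrow> z \<noteq> q \<longrightarrow>
        (\<Sum>e\<le>v. q e * R z e) < (\<Sum>e\<le>v. q e * R q e)))"

definition symmetric_sr :: "nat \<Rightarrow> ((nat \<Rightarrow> real) \<Rightarrow> nat \<Rightarrow> real) \<Rightarrow> bool" where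
  "symmetric_sr v R \<longleftrightarrow>
     (\<forall>\<sigma>. \<sigma> permutes {..v} \<longrightarrow> (\<forall>z e. prob_vec v z \<longrightarrow> e \<le> v \<longrightarrow>
        R (z \<circ> \<sigma>) e = R z (\<sigma> e)))"

end

theory Submission
  imports Defs
begin

text \<open>For the uniform prior, p(r) is p(z) with the entries r and z swapped, so by symmetry
  reporting r instead of z changes the expected score under \<theta> by
  (\<theta> r - \<theta> z) (R(p(z), z) - R(p(z), r)). Strict properness, applied with \<theta> = p(z), forces
  R(p(z), z) > R(p(z), r); hence the report r scores strictly less than z exactly when
  \<theta> r < \<theta> z, and the posterior p^(\<rho>)(t) is largest precisely at the unique mode of t.\<close>

lemma sum_mult_transpose:
  fixes g h :: "'a \<Rightarrow> real"
  assumes "finite A" "r \<in> A" "z \<in> A"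
  shows "(\<Sum>e\<in>A. g e * h (transpose r z e)) = (\<Sum>e\<in>A. g e * h e) + (g r - g z) * (h z - h r)"
proof (cases "r = z")
  case False
  have split: "(\<Sum>e\<in>A. F e) = F r + F z + (\<Sum>e\<in>A-{r}-{z}. F e)" for F :: "'a \<Rightarrow> real"
    using assms False by (simp add: sum.remove)
  have "(\<Sum>e\<in>A-{r}-{z}. g e * h (transpose r z e)) = (\<Sum>e\<in>A-{r}-{z}. g e * h e)"
    by (rule sum.cong) auto
  then show ?thesis
    by (subst (1 2) split) (simp add: algebra_simps)
qed simp

lemma p_single_transpose:
  assumes "r \<le> v" "z \<le> v"
  shows "p_single v (\<lambda>_. a) r = p_single v (\<lambda>_. a) z \<circ> transpose r z"
  using assms by (auto simp: p_single_def transpose_def)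

lemma prob_vec_p_single:
  assumes "x \<le> v"
  shows "prob_vec v (p_single v a x)"
proof -
  define s where "s = (\<Sum>m\<le>v. real (a m))"
  have s_pos: "1 + s > 0"
    unfolding s_def by (simp add: add_pos_nonneg sum_nonneg)
  have "(\<Sum>k\<le>v. p_single v a x k) = (\<Sum>k\<le>v. real (a k) + (if k = x then 1 else 0)) / (1 + s)"
    by (simp add: p_single_def s_def sum_divide_distrib)
  also have "\<dots> = 1"
    using assms s_pos by (simp add: sum.distrib s_def)
  finally show ?thesis
    unfolding prob_vec_def by (auto simp: p_single_def add_pos_nonneg sum_nonneg)
qed

lemma p_single_less_self:
  assumes "r \<noteq> x" "x \<le> v"
  shows "p_single v (\<lambda>_. a) x r < p_single v (\<lambda>_. a) x x"
  using assms by (simp add: p_single_def divide_strict_right_mono add_pos_nonneg sum_nonneg)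

lemma symmetric_sr_expected_score_transpose:
  fixes a :: nat
  assumes "symmetric_sr v R" "r \<le> v" "z \<le> v"
  defines "P \<equiv> p_single v (\<lambda>_. a)"
  shows "(\<Sum>e\<le>v. q e * R (P r) e) = (\<Sum>e\<le>v. q e * R (P z) e) + (q r - q z) * (R (P z) z - R (P z) r)"
proof -
  have "transpose r z permutes {..v}"
    using assms by (simp add: permutes_swap_id)
  then have "R (P r) e = R (P z) (transpose r z e)" if "e \<le> v" for e
    using assms(1) prob_vec_p_single[OF assms(3)] that
    unfolding symmetric_sr_def P_def p_single_transpose[OF assms(2,3)] by blast
  then have "(\<Sum>e\<le>v. q e * R (P r) e) = (\<Sum>e\<le>v. q e * R (P z) (transpose r z e))"
    by (intro sum.cong) auto
  also have "\<dots> = (\<Sum>e\<le>v. q e * R (P z) e) + (q r - q z) * (R (P z) z - R (P z) r)"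
    using assms by (intro sum_mult_transpose) auto
  finally show ?thesis .
qed

lemma proper_symmetric_score_less_own_report:
  fixes a :: nat
  assumes "strictly_proper v R" "symmetric_sr v R" "r \<le> v" "z \<le> v" "r \<noteq> z"
  defines "P \<equiv> p_single v (\<lambda>_. a)"
  shows "R (P z) r < R (P z) z"
proof -
  have own_larger: "P z r < P z z"
    using assms p_single_less_self by blast
  moreover have "P r z = P z r"
    using p_single_transpose[OF assms(3,4)] by (simp add: P_def)
  ultimately have "P r \<noteq> P z" by auto
  then have "(\<Sum>e\<le>v. P z e * R (P r) e) < (\<Sum>e\<le>v. P z e * R (P z) e)"
    using assms(1,3,4) prob_vec_p_single unfolding strictly_proper_def P_def by blast
  then have "(P z r - P z z) * (R (P z) z - R (P z) r) < 0"
    using symmetric_sr_expected_score_transpose[OF assms(2-4), where q = "P z"] by (simp add: P_def)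
  with own_larger show ?thesis
    by (simp add: mult_less_0_iff)
qed

lemma expected_score_less_of_prob_less:
  fixes a :: nat
  assumes "strictly_proper v R" "symmetric_sr v R" "r \<le> v" "z \<le> v" "q r < q z"
  defines "P \<equiv> p_single v (\<lambda>_. a)"
  shows "(\<Sum>e\<le>v. q e * R (P r) e) < (\<Sum>e\<le>v. q e * R (P z) e)"
proof -
  have "R (P z) r < R (P z) z"
    using assms proper_symmetric_score_less_own_report by blast
  then have "(q r - q z) * (R (P z) z - R (P z) r) < 0"
    using assms(5) by (simp add: mult_neg_pos)
  then show ?thesis
    using symmetric_sr_expected_score_transpose[OF assms(2-4), where q = q] by (simp add: P_def)
qed

lemma p_rho_less:
  assumes "y \<le> v" "z \<le> v" "\<rho> \<ge> 1" "a y \<le> a z" "sig_count \<rho> t y < sig_count \<rho> t z"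
  shows "p_rho v \<rho> a t y < p_rho v \<rho> a t z"
  using assms by (simp add: p_rho_def divide_strict_right_mono add_pos_nonneg sum_nonneg)

lemma sum_affine_score_less_iff:
  fixes q :: "nat \<Rightarrow> real"
  assumes "finite J" "J \<noteq> {}" "\<gamma> > 0"
  shows "(\<Sum>j\<in>J. \<Sum>e\<le>v. q e * (\<gamma> * R x e + lam)) < (\<Sum>j\<in>J. \<Sum>e\<le>v. q e * (\<gamma> * R y e + lam))
    \<longleftrightarrow> (\<Sum>e\<le>v. q e * R x e) < (\<Sum>e\<le>v. q e * R y e)"
proof -
  have "(\<Sum>j\<in>J. \<Sum>e\<le>v. q e * (\<gamma> * R w e + lam))
      = real (card J) * (\<gamma> * (\<Sum>e\<le>v. q e * R w e) + lam * (\<Sum>e\<le>v. q e))" for w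
    by (simp add: algebra_simps sum.distrib sum_distrib_left)
  moreover have "real (card J) > 0"
    using assms by (simp add: card_gt_0_iff)
  ultimately show ?thesis
    using assms(3) by (simp add: mult_less_cancel_left_pos)
qed

lemma strict_maximizer_iff:
  assumes "P z" "\<And>r. P r \<Longrightarrow> r \<noteq> z \<Longrightarrow> f r < (f z :: real)" "P r"
  shows "(\<forall>r'. P r' \<longrightarrow> r' \<noteq> r \<longrightarrow> f r' < f r) \<longleftrightarrow> r = z"
  using assms by (metis less_asym)

theorem proposition4:
  fixes v \<rho> \<alpha> n i :: nat
    and R :: "(nat \<Rightarrow> real) \<Rightarrow> nat \<Rightarrow> real"
    and t :: "nat \<Rightarrow> nat"
    and z :: nat
    and \<gamma> lam :: real
  assumes "v \<ge> 1" and "\<rho> \<ge> 1" and "\<alpha> \<ge> 1"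
    and "symmetric_sr v R" and "strictly_proper v R"
    and "n \<ge> 2" and "i \<in> {1..n}"
    and "\<forall>m\<in>{1..\<rho>}. t m \<le> v"
    and "z \<le> v"
    and "\<forall>y\<le>v. y \<noteq> z \<longrightarrow> sig_count \<rho> t y < sig_count \<rho> t z"
    and "\<gamma> > 0"
  shows "\<forall>r\<le>v.
     ((\<forall>r'\<le>v. r' \<noteq> r \<longrightarrow>
        (\<Sum>j\<in>{1..n}-{i}. \<Sum>e\<le>v. p_rho v \<rho> (\<lambda>_. \<alpha>) t e *
            (\<gamma> * R (p_single v (\<lambda>_. \<alpha>) r') e + lam))
      < (\<Sum>j\<in>{1..n}-{i}. \<Sum>e\<le>v. p_rho v \<rho> (\<lambda>_. \<alpha>) t e *
            (\<gamma> * R (p_single v (\<lambda>_. \<alpha>) r) e + lam)))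
     \<longleftrightarrow> r = z)"
proof -
  define \<theta> where "\<theta> = p_rho v \<rho> (\<lambda>_. \<alpha>) t"
  define S where "S r = (\<Sum>e\<le>v. \<theta> e * R (p_single v (\<lambda>_. \<alpha>) r) e)" for r
  have others_nonempty: "{1..n} - {i} \<noteq> {}"
  proof -
    have "(if i = 1 then 2 else 1) \<in> {1..n} - {i}"
      using assms(6,7) by auto
    then show ?thesis by blast
  qed
  have "S r < S z" if "r \<le> v" "r \<noteq> z" for r
    unfolding S_def using assms(2,4,5,9,10) that
    by (intro expected_score_less_of_prob_less) (auto simp: \<theta>_def intro: p_rho_less)
  then have "(\<forall>r'. r' \<le> v \<longrightarrow> r' \<noteq> r \<longrightarrow> S r' < S r) \<longleftrightarrow> r = z" if "r \<le> v" for r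
    using assms(9) that by (intro strict_maximizer_iff) auto
  moreover have "(\<Sum>j\<in>{1..n}-{i}. \<Sum>e\<le>v. \<theta> e * (\<gamma> * R (p_single v (\<lambda>_. \<alpha>) r') e + lam))
      < (\<Sum>j\<in>{1..n}-{i}. \<Sum>e\<le>v. \<theta> e * (\<gamma> * R (p_single v (\<lambda>_. \<alpha>) r) e + lam))
    \<longleftrightarrow> S r' < S r" for r r'
    unfolding S_def using others_nonempty assms(11) by (intro sum_affine_score_less_iff) auto
  ultimately show ?thesis
    unfolding \<theta>_def by presburger
qed

end
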